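(* For every digraph $X$, the Redei–Berge polynomial $u_X(m)$ is a polynomial in $m$ with integer coefficients.
   Context: A digraph $X=(V,E)$: $V$ finite, $E\subset\{(u,v)\in V\times V\mid u\ne v\}$. $\Sigma_V$ is the set of bijections $\sigma:[n]\to V$ ($n=|V|$), $X\mathrm{Des}(\sigma)=\{i\in[n-1]\mid(\sigma_i,\sigma_{i+1})\in E\}$; $F_I=\sum x_{i_1}\cdots x_{i_n}$ over $1\le i_1\le\cdots\le i_n$ with $i_j<i_{j+1}$ for $j\in I$; $U_X=\sum_{\sigma\in\Sigma_V}F_{X\mathrm{Des}(\sigma)}$; $u_X(m)$ is the principal specialization $U_X(1,\dots,1,0,\dots)$ ($m$ ones), a polynomial in $m$ (a priori with rational coefficients). *)

theory Defs
  imports "HOL-Computational_Algebra.Polynomial" "HOL-Library.FuncSet"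
begin

definition digraph :: "'a set \<Rightarrow> ('a \<times> 'a) set \<Rightarrow> bool" where
  "digraph V E \<longleftrightarrow> finite V \<and> E \<subseteq> {(u, v). u \<in> V \<and> v \<in> V \<and> u \<noteq> v}"

definition Sigma_V :: "'a set \<Rightarrow> (nat \<Rightarrow> 'a) set" where
  "Sigma_V V = {\<sigma>. \<sigma> \<in> {1..card V} \<rightarrow>\<^sub>E V \<and> bij_betw \<sigma> {1..card V} V}"

definition XDes :: "('a \<times> 'a) set \<Rightarrow> nat \<Rightarrow> (nat \<Rightarrow> 'a) \<Rightarrow> nat set" where
  "XDes E n \<sigma> = {i \<in> {1..n-1}. (\<sigma> i, \<sigma> (Suc i)) \<in> E}"

text \<open>Principal specialization F_I(1,...,1,0,...) (m ones) of the fundamental quasisymmetric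
  function F_I of degree n: the number of monomials x_{i_1}...x_{i_n} with
  1 <= i_1 <= ... <= i_n <= m and i_j < i_{j+1} for j in I.  Sequences are encoded as
  functions nat => nat that are 0 outside [n].\<close>
definition F_spec :: "nat \<Rightarrow> nat set \<Rightarrow> nat \<Rightarrow> nat" where
  "F_spec n I m = card {i :: nat \<Rightarrow> nat.
      (\<forall>j\<in>{1..n}. 1 \<le> i j \<and> i j \<le> m) \<and>
      (\<forall>j\<in>{1..<n}. i j \<le> i (Suc j)) \<and>
      (\<forall>j\<in>I. i j < i (Suc j)) \<and>
      (\<forall>j. j \<notin> {1..n} \<longrightarrow> i j = 0)}"

text \<open>u_X(m) = U_X(1^m) = sum over sigma in Sigma_V of F_{XDes(sigma)}(1^m).\<close>
definition redei_berge_u :: "'a set \<Rightarrow> ('a \<times> 'a) set \<Rightarrow> nat \<Rightarrow> nat" where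
  "redei_berge_u V E m = (\<Sum>\<sigma>\<in>Sigma_V V. F_spec (card V) (XDes E (card V) \<sigma>) m)"

end

theory Submission
  imports Defs
begin

text \<open>
  Read u_X(m) as the number of pairs (\<sigma>, i) of an ordering \<sigma> of V and a weakly increasing
  labelling i of its positions by 1, ..., m that increases strictly at every X-descent of \<sigma>.
  The positions with the top label m form a final block of \<sigma> without X-descents; splitting it
  off and inducting on m gives u_X(m) = \<Sum>f : V \<rightarrow> [m]. \<Prod>c. h(f\<inverse>(c)), where h(T) counts the
  descent-free orderings of T and h(\<emptyset>) = 1.  Such a colouring sum G(S, k) over k colours is an
  integer polynomial in k: fixing x \<in> S, its colour and its colour class T gives
  G(S, k) = k \<cdot> \<Sum>T\<ni>x. h(T) G(S - T, k - 1), and induction on |S| applies.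
\<close>

section \<open>Colouring sums\<close>

definition colouring_sum :: "('a set \<Rightarrow> 'b::comm_semiring_1) \<Rightarrow> 'a set \<Rightarrow> 'c set \<Rightarrow> 'b" where
  "colouring_sum w S C = (\<Sum>f\<in>S \<rightarrow>\<^sub>E C. \<Prod>c\<in>C. w {v\<in>S. f v = c})"

lemma sum_colourings_by_colour_class:
  fixes w :: "'a set \<Rightarrow> 'b::comm_semiring_1" and c :: 'c
  assumes "finite S" "finite C" "c \<notin> C"
  shows "(\<Sum>f | f \<in> S \<rightarrow>\<^sub>E insert c C \<and> P {v\<in>S. f v = c}. \<Prod>c'\<in>insert c C. w {v\<in>S. f v = c'})
       = (\<Sum>T | T \<subseteq> S \<and> P T. w T * colouring_sum w (S - T) C)"
proof -
  let ?A = "SIGMA T:{T. T \<subseteq> S \<and> P T}. (S - T) \<rightarrow>\<^sub>E C"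
  define extend :: "'a set \<times> ('a \<Rightarrow> 'c) \<Rightarrow> 'a \<Rightarrow> 'c" where "extend = (\<lambda>(T, g) v. if v \<in> T then c else g v)"
  have class_c: "{v\<in>S. extend (T, g) v = c} = T"
    and class_other: "c' \<in> C \<Longrightarrow> {v\<in>S. extend (T, g) v = c'} = {v\<in>S - T. g v = c'}"
    if "(T, g) \<in> ?A" for T g c' using that assms(3) by (auto simp: extend_def)
  have "bij_betw extend ?A {f \<in> S \<rightarrow>\<^sub>E insert c C. P {v\<in>S. f v = c}}"
  proof (rule bij_betw_byWitness[where f' = "\<lambda>f. ({v\<in>S. f v = c}, restrict f (S - {v\<in>S. f v = c}))"])
    show "\<forall>x\<in>?A. ({v\<in>S. extend x v = c}, restrict (extend x) (S - {v\<in>S. extend x v = c})) = x"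
      using class_c by (force simp: extend_def PiE_def extensional_def)
    show "\<forall>f\<in>{f \<in> S \<rightarrow>\<^sub>E insert c C. P {v\<in>S. f v = c}}.
            extend ({v\<in>S. f v = c}, restrict f (S - {v\<in>S. f v = c})) = f"
      by (force simp: extend_def PiE_def extensional_def)
    show "extend ` ?A \<subseteq> {f \<in> S \<rightarrow>\<^sub>E insert c C. P {v\<in>S. f v = c}}"
      using class_c by (force simp: extend_def PiE_def extensional_def)
    show "(\<lambda>f. ({v\<in>S. f v = c}, restrict f (S - {v\<in>S. f v = c})))
            ` {f \<in> S \<rightarrow>\<^sub>E insert c C. P {v\<in>S. f v = c}} \<subseteq> ?A"
      by (force simp: PiE_def Pi_def)
  qed
  then have "(\<Sum>f | f \<in> S \<rightarrow>\<^sub>E insert c C \<and> P {v\<in>S. f v = c}. \<Prod>c'\<in>insert c C. w {v\<in>S. f v = c'})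
      = (\<Sum>(T, g)\<in>?A. \<Prod>c'\<in>insert c C. w {v\<in>S. extend (T, g) v = c'})"
    by (simp add: sum.reindex_bij_betw[symmetric] case_prod_unfold)
  also have "\<dots> = (\<Sum>(T, g)\<in>?A. w T * (\<Prod>c'\<in>C. w {v\<in>S - T. g v = c'}))"
    using assms(2,3) class_c class_other by (intro sum.cong refl) (auto cong: prod.cong)
  also have "\<dots> = (\<Sum>T | T \<subseteq> S \<and> P T. w T * colouring_sum w (S - T) C)"
    using assms(1,2) by (subst sum.Sigma[symmetric]) (auto simp: colouring_sum_def sum_distrib_left intro: finite_PiE)
  finally show ?thesis .
qed

lemma colouring_sum_insert:
  assumes "finite S" "finite C" "c \<notin> C"
  shows "colouring_sum w S (insert c C) = (\<Sum>T\<in>Pow S. w T * colouring_sum w (S - T) C)"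
  using sum_colourings_by_colour_class[OF assms, where P = "\<lambda>_. True" and w = w]
  by (simp add: colouring_sum_def Pow_def)

lemma colouring_sum_by_colour_of:
  assumes "finite S" "finite C" "x \<in> S"
  shows "colouring_sum w S C = (\<Sum>c\<in>C. \<Sum>T | T \<subseteq> S \<and> x \<in> T. w T * colouring_sum w (S - T) (C - {c}))"
proof -
  let ?W = "\<lambda>f. \<Prod>c\<in>C. w {v\<in>S. f v = c}"
  have "colouring_sum w S C = (\<Sum>f\<in>S \<rightarrow>\<^sub>E C. \<Sum>c\<in>C. if f x = c then ?W f else 0)"
    unfolding colouring_sum_def
  proof (rule sum.cong[OF refl])
    fix f assume "f \<in> S \<rightarrow>\<^sub>E C"
    then have "f x \<in> C" using assms(3) by auto
    then show "?W f = (\<Sum>c\<in>C. if f x = c then ?W f else 0)"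
      using assms(2) by (simp add: sum.delta)
  qed
  also have "\<dots> = (\<Sum>c\<in>C. \<Sum>f\<in>S \<rightarrow>\<^sub>E C. if f x = c then ?W f else 0)"
    by (rule sum.swap)
  also have "\<dots> = (\<Sum>c\<in>C. \<Sum>f | f \<in> S \<rightarrow>\<^sub>E C \<and> f x = c. ?W f)"
    using assms by (simp add: sum.inter_filter finite_PiE)
  also have "\<dots> = (\<Sum>c\<in>C. \<Sum>T | T \<subseteq> S \<and> x \<in> T. w T * colouring_sum w (S - T) (C - {c}))"
  proof (rule sum.cong[OF refl])
    fix c assume "c \<in> C"
    then have C_eq: "insert c (C - {c}) = C" by auto
    have "(\<Sum>f | f \<in> S \<rightarrow>\<^sub>E insert c (C - {c}) \<and> x \<in> {v\<in>S. f v = c}.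
            \<Prod>c'\<in>insert c (C - {c}). w {v\<in>S. f v = c'})
        = (\<Sum>T | T \<subseteq> S \<and> x \<in> T. w T * colouring_sum w (S - T) (C - {c}))"
      using assms by (intro sum_colourings_by_colour_class) auto
    moreover have "{f. f \<in> S \<rightarrow>\<^sub>E C \<and> x \<in> {v\<in>S. f v = c}} = {f. f \<in> S \<rightarrow>\<^sub>E C \<and> f x = c}"
      using assms(3) by blast
    ultimately show "(\<Sum>f | f \<in> S \<rightarrow>\<^sub>E C \<and> f x = c. ?W f)
        = (\<Sum>T | T \<subseteq> S \<and> x \<in> T. w T * colouring_sum w (S - T) (C - {c}))"
      by (simp only: C_eq)
  qed
  finally show ?thesis .
qed

lemma colouring_sum_no_colours: "colouring_sum w S {} = (if S = {} then 1 else 0)"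
  by (cases "S = {}") (auto simp: colouring_sum_def PiE_eq_empty_iff)

lemma colouring_sum_empty_set: "w {} = 1 \<Longrightarrow> colouring_sum w {} C = 1"
  by (simp add: colouring_sum_def)

lemma colouring_sum_polynomial:
  fixes w :: "'a set \<Rightarrow> 'b::comm_ring_1"
  assumes "finite S" "w {} = 1"
  shows "\<exists>p. \<forall>C :: 'c set. finite C \<longrightarrow> colouring_sum w S C = poly p (of_nat (card C))"
  using assms(1)
proof (induction "card S" arbitrary: S rule: less_induct)
  case less
  show ?case
  proof (cases "S = {}")
    case True
    then show ?thesis using assms(2) by (intro exI[of _ 1]) (simp add: colouring_sum_empty_set)
  next
    case False
    then obtain x where x: "x \<in> S" by auto
    define Ts where "Ts = {T. T \<subseteq> S \<and> x \<in> T}"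
    have "\<forall>T\<in>Ts. \<exists>p. \<forall>C :: 'c set. finite C \<longrightarrow> colouring_sum w (S - T) C = poly p (of_nat (card C))"
      using less x unfolding Ts_def by (intro ballI less.hyps psubset_card_mono) auto
    then obtain p where p: "\<And>T C. T \<in> Ts \<Longrightarrow> finite (C :: 'c set)
        \<Longrightarrow> colouring_sum w (S - T) C = poly (p T) (of_nat (card C))"
      by metis
    \<comment> \<open>the colour of x is chosen in card C ways and the other classes use the remaining colours\<close>
    define q where "q = [:0, 1:] * (\<Sum>T\<in>Ts. smult (w T) (p T \<circ>\<^sub>p [:-1, 1:]))"
    show ?thesis
    proof (intro exI[of _ q] allI impI)
      fix C :: "'c set" assume C: "finite C"
      have card_rest: "of_nat (card (C - {c})) = (of_nat (card C) - 1 :: 'b)" if "c \<in> C" for c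
      proof -
        have "1 \<le> card C" using C that by (auto simp: Suc_le_eq card_gt_0_iff)
        then show ?thesis using C that by (simp add: card_Diff_singleton of_nat_diff)
      qed
      have "colouring_sum w S C = (\<Sum>c\<in>C. \<Sum>T\<in>Ts. w T * poly (p T) (of_nat (card C) - 1))"
        unfolding colouring_sum_by_colour_of[OF less.prems C x] Ts_def[symmetric]
        using C p card_rest by (intro sum.cong refl) auto
      also have "\<dots> = poly q (of_nat (card C))"
        by (simp add: q_def poly_sum poly_pcompose)
      finally show "colouring_sum w S C = poly q (of_nat (card C))" .
    qed
  qed
qed

section \<open>Sequences indexed from 1\<close>

definition seq_append :: "nat \<Rightarrow> (nat \<Rightarrow> 'a) \<Rightarrow> (nat \<Rightarrow> 'a) \<Rightarrow> nat \<Rightarrow> 'a" where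
  "seq_append a f g = (\<lambda>j. if j \<le> a then f j else g (j - a))"

lemma seq_append_eq_iff:
  assumes "\<And>j. a < j \<Longrightarrow> f j = f' j" "g 0 = g' 0"
  shows "seq_append a f g = seq_append a f' g' \<longleftrightarrow> f = f' \<and> g = g'"
proof
  assume eq: "seq_append a f g = seq_append a f' g'"
  have "f j = f' j" for j
    using assms(1)[of j] fun_cong[OF eq, of j] by (cases "j \<le> a") (auto simp: seq_append_def)
  moreover have "g j = g' j" for j
    using assms(2) fun_cong[OF eq, of "j + a"] by (cases j) (auto simp: seq_append_def)
  ultimately show "f = f' \<and> g = g'" by auto
qed simp

lemma bij_betw_seq_append:
  assumes "bij_betw f {1..a} A" "bij_betw g {1..b} B" "A \<inter> B = {}"
  shows "bij_betw (seq_append a f g) {1..a + b} (A \<union> B)"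
proof -
  have "bij_betw (\<lambda>j. j - a) {a<..a + b} {1..b}"
    by (rule bij_betw_byWitness[where f' = "\<lambda>j. j + a"]) auto
  then have "bij_betw (g \<circ> (\<lambda>j. j - a)) {a<..a + b} B"
    using assms(2) by (rule bij_betw_trans)
  then have "bij_betw (seq_append a f g) {a<..a + b} B"
    by (rule bij_betw_cong[THEN iffD1, rotated]) (auto simp: seq_append_def)
  moreover have "bij_betw (seq_append a f g) {1..a} A"
    using assms(1) by (rule bij_betw_cong[THEN iffD1, rotated]) (auto simp: seq_append_def)
  ultimately have "bij_betw (seq_append a f g) ({1..a} \<union> {a<..a + b}) (A \<union> B)"
    using assms(3) by (intro bij_betw_combine) auto
  moreover have "{1..a} \<union> {a<..a + b} = {1..a + b}" by auto
  ultimately show ?thesis by simp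
qed

lemma Sigma_V_seq_append:
  assumes "finite A" "finite B" "A \<inter> B = {}" "\<sigma> \<in> Sigma_V A" "\<tau> \<in> Sigma_V B"
  shows "seq_append (card A) \<sigma> \<tau> \<in> Sigma_V (A \<union> B)"
proof -
  have card: "card (A \<union> B) = card A + card B"
    using assms(1-3) by (simp add: card_Un_disjoint)
  have "bij_betw (seq_append (card A) \<sigma> \<tau>) {1..card (A \<union> B)} (A \<union> B)"
    unfolding card using assms(3-5) by (intro bij_betw_seq_append) (auto simp: Sigma_V_def)
  moreover have "seq_append (card A) \<sigma> \<tau> j = undefined" if "j \<notin> {1..card (A \<union> B)}" for j
  proof (cases "j \<le> card A")
    case False
    then have "j - card A \<notin> {1..card B}" using that card by auto
    then show ?thesis using False assms(5) by (auto simp: seq_append_def Sigma_V_def PiE_def extensional_def)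
  qed (use that card assms(4) in \<open>auto simp: seq_append_def Sigma_V_def PiE_def extensional_def\<close>)
  ultimately show ?thesis
    by (simp add: Sigma_V_def PiE_def extensional_def bij_betw_imp_funcset)
qed

lemma Sigma_V_split:
  assumes "\<sigma> \<in> Sigma_V V" "a \<le> card V"
  defines "T \<equiv> \<sigma> ` {a<..card V}"
  shows "T \<subseteq> V" "card (V - T) = a"
    and "restrict \<sigma> {1..a} \<in> Sigma_V (V - T)"
    and "restrict (\<lambda>j. \<sigma> (j + a)) {1..card V - a} \<in> Sigma_V T"
    and "\<sigma> = seq_append a (restrict \<sigma> {1..a}) (restrict (\<lambda>j. \<sigma> (j + a)) {1..card V - a})"
proof -
  have bij: "bij_betw \<sigma> {1..card V} V" and ext: "\<sigma> \<in> extensional {1..card V}"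
    using assms(1) by (auto simp: Sigma_V_def PiE_def)
  have parts: "{1..card V} = {1..a} \<union> {a<..card V}" "{1..a} \<inter> {a<..card V} = {}"
    using assms(2) by auto
  have "bij_betw \<sigma> {1..a} (\<sigma> ` {1..a})" "bij_betw \<sigma> {a<..card V} T"
    using bij parts(1) unfolding T_def by (auto intro: bij_betw_subset)
  moreover have "V - T = \<sigma> ` {1..a}"
  proof -
    have inj: "inj_on \<sigma> {1..card V}" and img: "\<sigma> ` {1..card V} = V"
      using bij by (simp_all add: bij_betw_def)
    have sub: "{1..a} \<subseteq> {1..card V}" "{a<..card V} \<subseteq> {1..card V}"
      using assms(2) by auto
    have "\<sigma> ` {1..a} \<union> T = V"
      using img unfolding T_def parts(1) image_Un by simp
    moreover have "\<sigma> ` {1..a} \<inter> T = {}"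
      using inj_on_image_Int[OF inj sub] parts(2) unfolding T_def by simp
    ultimately show ?thesis by blast
  qed
  ultimately have prefix: "bij_betw \<sigma> {1..a} (V - T)" and suffix: "bij_betw \<sigma> {a<..card V} T"
    by simp_all
  show "T \<subseteq> V" using bij parts(1) unfolding T_def bij_betw_def by auto
  show "card (V - T) = a" using bij_betw_same_card[OF prefix] by simp
  show "restrict \<sigma> {1..a} \<in> Sigma_V (V - T)"
    using prefix \<open>card (V - T) = a\<close> by (simp add: Sigma_V_def bij_betw_imp_funcset)
  have "bij_betw (\<lambda>j. j + a) {1..card V - a} {a<..card V}"
    using assms(2) by (intro bij_betw_byWitness[where f' = "\<lambda>j. j - a"]) auto
  then have "bij_betw (\<lambda>j. \<sigma> (j + a)) {1..card V - a} T"
    using bij_betw_trans[OF _ suffix] by (simp add: comp_def)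
  moreover have "card T = card V - a"
    using bij_betw_same_card[OF suffix] by simp
  ultimately show "restrict (\<lambda>j. \<sigma> (j + a)) {1..card V - a} \<in> Sigma_V T"
    by (simp add: Sigma_V_def bij_betw_imp_funcset)
  show "\<sigma> = seq_append a (restrict \<sigma> {1..a}) (restrict (\<lambda>j. \<sigma> (j + a)) {1..card V - a})"
  proof
    fix j
    show "\<sigma> j = seq_append a (restrict \<sigma> {1..a}) (restrict (\<lambda>j. \<sigma> (j + a)) {1..card V - a}) j"
      using ext assms(2) by (cases "j \<le> a"; cases "j \<le> card V") (auto simp: seq_append_def extensional_def)
  qed
qed

lemma XDes_seq_append:
  "XDes E (a + b) (seq_append a f g)
     = XDes E a f \<union> {j. j = a \<and> 0 < a \<and> 0 < b \<and> (f a, g 1) \<in> E} \<union> (\<lambda>j. j + a) ` XDes E b g"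
  (is "?D = ?L \<union> ?M \<union> ?R")
proof (intro equalityI subsetI)
  fix j assume j: "j \<in> ?D"
  consider "j < a" | "j = a" | "a < j" by linarith
  then show "j \<in> ?L \<union> ?M \<union> ?R"
  proof cases
    case 3
    then have "j - a \<in> XDes E b g" and "j = (j - a) + a"
      using j by (auto simp: XDes_def seq_append_def Suc_diff_le)
    then show ?thesis by blast
  qed (use j in \<open>auto simp: XDes_def seq_append_def\<close>)
next
  fix j assume "j \<in> ?L \<union> ?M \<union> ?R"
  then show "j \<in> ?D"
    by (auto simp: XDes_def seq_append_def Suc_diff_le)
qed

lemma level_set_eq_initial_segment:
  fixes i :: "nat \<Rightarrow> 'b::order"
  assumes mono: "\<forall>j\<in>{1..<n}. i j \<le> i (Suc j)"
  shows "{j \<in> {1..n}. i j \<le> t} = {1..card {j \<in> {1..n}. i j \<le> t}}"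
    (is "?D = {1..card ?D}")
proof (cases "?D = {}")
  case False
  have fin: "finite ?D" by simp
  define k where "k = Max ?D"
  have k: "k \<in> {1..n}" "i k \<le> t"
    using Max_in[OF fin False] unfolding k_def by auto
  have "?D = {1..k}"
  proof (intro equalityI subsetI)
    fix j assume "j \<in> ?D"
    then show "j \<in> {1..k}" unfolding k_def using Max_ge[OF fin] by auto
  next
    fix j assume j: "j \<in> {1..k}"
    have "i j \<le> i k"
      by (rule lift_Suc_mono_le_ivl[where N = "{1..<n}"]) (use j k mono in auto)
    then show "j \<in> ?D" using j k by auto
  qed
  then show ?thesis by simp
qed simp

definition F_seqs :: "nat \<Rightarrow> nat set \<Rightarrow> nat \<Rightarrow> (nat \<Rightarrow> nat) set" where
  "F_seqs n I m = {i.
      (\<forall>j\<in>{1..n}. 1 \<le> i j \<and> i j \<le> m) \<and>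
      (\<forall>j\<in>{1..<n}. i j \<le> i (Suc j)) \<and>
      (\<forall>j\<in>I. i j < i (Suc j)) \<and>
      (\<forall>j. j \<notin> {1..n} \<longrightarrow> i j = 0)}"

lemma F_spec_eq_card_F_seqs: "F_spec n I m = card (F_seqs n I m)"
  by (simp add: F_spec_def F_seqs_def)

lemma finite_F_seqs: "finite (F_seqs n I m)"
proof (rule finite_subset)
  show "F_seqs n I m \<subseteq> {i. \<forall>j. (j \<in> {1..n} \<longrightarrow> i j \<in> {1..m}) \<and> (j \<notin> {1..n} \<longrightarrow> i j = 0)}"
    by (auto simp: F_seqs_def)
qed (intro finite_set_of_finite_funs; simp)

lemma F_seqs_antimono: "I \<subseteq> J \<Longrightarrow> F_seqs n J m \<subseteq> F_seqs n I m"
  by (auto simp: F_seqs_def)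

lemma F_seqs_strict_below:
  assumes "i \<in> F_seqs n I m" "j \<in> I"
  shows "j < n"
proof (rule ccontr)
  assume "\<not> j < n"
  then have "i (Suc j) = 0" using assms(1) by (simp add: F_seqs_def)
  then show False using assms by (auto simp: F_seqs_def)
qed

definition flat_seq :: "nat \<Rightarrow> nat \<Rightarrow> nat \<Rightarrow> nat" where
  "flat_seq b k = (\<lambda>j. if j \<in> {1..b} then k else 0)"

lemma F_seqs_seq_append_flat:
  assumes i: "i \<in> F_seqs a I' m" and I: "I \<subseteq> I' \<union> {a}" "I \<subseteq> {..<a + b}"
  shows "seq_append a i (flat_seq b (Suc m)) \<in> F_seqs (a + b) I (Suc m)"
proof -
  define i' where "i' = seq_append a i (flat_seq b (Suc m))"
  have low: "j \<le> a \<Longrightarrow> i' j = i j" and high: "a < j \<Longrightarrow> j \<le> a + b \<Longrightarrow> i' j = Suc m"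
    and out: "a + b < j \<Longrightarrow> i' j = 0" for j
    by (auto simp: i'_def seq_append_def flat_seq_def)
  have bound: "j \<in> {1..a} \<Longrightarrow> 1 \<le> i j \<and> i j \<le> m" and mono: "j \<in> {1..<a} \<Longrightarrow> i j \<le> i (Suc j)"
    and zero: "j \<notin> {1..a} \<Longrightarrow> i j = 0" for j
    using i by (auto simp: F_seqs_def)
  have strict: "i j < i (Suc j)" "j < a" if "j \<in> I'" for j
    using i that F_seqs_strict_below[OF i that] by (auto simp: F_seqs_def)
  have "i' \<in> F_seqs (a + b) I (Suc m)"
    unfolding F_seqs_def
  proof (intro CollectI conjI ballI allI impI)
    fix j assume j: "j \<in> {1..a + b}"
    then show "1 \<le> i' j" "i' j \<le> Suc m"
      using bound[of j] low[of j] high[of j] by (cases "j \<le> a"; force)+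
  next
    fix j assume j: "j \<in> {1..<a + b}"
    consider "Suc j \<le> a" | "j = a" | "a < j" by linarith
    then show "i' j \<le> i' (Suc j)"
    proof cases
      case 2
      then show ?thesis using j bound[of a] low[of a] high[of "Suc a"] by auto
    qed (use j mono low high in auto)
  next
    fix j assume "j \<in> I"
    then consider "j \<in> I'" | "j = a" "a < a + b" using I by blast
    then show "i' j < i' (Suc j)"
    proof cases
      case 1
      then show ?thesis using strict[OF 1] low by (simp add: Suc_le_eq)
    next
      case 2
      then show ?thesis using bound[of a] zero[of 0] low[of a] high[of "Suc a"] by (cases "a = 0") auto
    qed
  next
    fix j assume "j \<notin> {1..a + b}"
    then show "i' j = 0" using zero[of 0] low[of 0] out[of j] by (cases "j = 0") auto
  qed
  then show ?thesis unfolding i'_def .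
qed

lemma F_seqs_split_top:
  assumes i: "i \<in> F_seqs n I (Suc m)"
  defines "a \<equiv> card {j \<in> {1..n}. i j \<le> m}"
  shows "a \<le> n" "I \<subseteq> {..a}"
    and "(\<lambda>j. if j \<le> a then i j else 0) \<in> F_seqs a (I \<inter> {..<a}) m"
    and "i = seq_append a (\<lambda>j. if j \<le> a then i j else 0) (flat_seq (n - a) (Suc m))"
proof -
  have bound: "j \<in> {1..n} \<Longrightarrow> 1 \<le> i j \<and> i j \<le> Suc m" and zero: "j \<notin> {1..n} \<Longrightarrow> i j = 0"
    and mono: "\<forall>j\<in>{1..<n}. i j \<le> i (Suc j)" and strict: "j \<in> I \<Longrightarrow> i j < i (Suc j)" for j
    using i by (auto simp: F_seqs_def)
  have low: "{j \<in> {1..n}. i j \<le> m} = {1..a}"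
    unfolding a_def by (rule level_set_eq_initial_segment[OF mono])
  have "a \<le> card {1..n}" unfolding a_def by (rule card_mono) auto
  then show "a \<le> n" by simp
  have top: "i j = Suc m" if "j \<in> {1..n}" "a < j" for j
  proof -
    have "j \<notin> {j \<in> {1..n}. i j \<le> m}" unfolding low using that(2) by simp
    then have "\<not> i j \<le> m" using that(1) by simp
    then show ?thesis using bound[OF that(1)] by simp
  qed
  show "I \<subseteq> {..a}"
  proof
    fix j assume j: "j \<in> I"
    have "j < n" by (rule F_seqs_strict_below[OF i j])
    then show "j \<in> {..a}" using strict[OF j] top[of j] top[of "Suc j"] by (cases "a < j") auto
  qed
  have low': "j \<in> {1..a} \<Longrightarrow> j \<in> {1..n} \<and> i j \<le> m" for j using low by blast
  show "(\<lambda>j. if j \<le> a then i j else 0) \<in> F_seqs a (I \<inter> {..<a}) m"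
    unfolding F_seqs_def using bound low' mono strict zero \<open>a \<le> n\<close> by auto
  show "i = seq_append a (\<lambda>j. if j \<le> a then i j else 0) (flat_seq (n - a) (Suc m))"
  proof
    fix j
    show "i j = seq_append a (\<lambda>j. if j \<le> a then i j else 0) (flat_seq (n - a) (Suc m)) j"
      using top[of j] zero[of j] \<open>a \<le> n\<close> by (auto simp: seq_append_def flat_seq_def)
  qed
qed

section \<open>Labelled orderings\<close>

lemma finite_Sigma_V: "finite V \<Longrightarrow> finite (Sigma_V V)"
  unfolding Sigma_V_def by (rule finite_subset[of _ "{1..card V} \<rightarrow>\<^sub>E V"]) (auto intro: finite_PiE)

lemma Sigma_V_empty: "Sigma_V {} = {\<lambda>_. undefined}"
  by (auto simp: Sigma_V_def bij_betw_def)

definition descent_free :: "('a \<times> 'a) set \<Rightarrow> 'a set \<Rightarrow> (nat \<Rightarrow> 'a) set" where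
  "descent_free E T = {\<sigma> \<in> Sigma_V T. XDes E (card T) \<sigma> = {}}"

lemma finite_descent_free: "finite T \<Longrightarrow> finite (descent_free E T)"
  by (simp add: descent_free_def finite_Sigma_V)

lemma card_descent_free_empty: "card (descent_free E {}) = 1"
  by (simp add: descent_free_def Sigma_V_empty XDes_def)

definition labelled_orderings :: "('a \<times> 'a) set \<Rightarrow> 'a set \<Rightarrow> nat \<Rightarrow> ((nat \<Rightarrow> 'a) \<times> (nat \<Rightarrow> nat)) set" where
  "labelled_orderings E V m = (SIGMA \<sigma>:Sigma_V V. F_seqs (card V) (XDes E (card V) \<sigma>) m)"

lemma finite_labelled_orderings: "finite V \<Longrightarrow> finite (labelled_orderings E V m)"
  by (simp add: labelled_orderings_def finite_Sigma_V finite_F_seqs)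

lemma redei_berge_u_eq_card: "finite V \<Longrightarrow> redei_berge_u V E m = card (labelled_orderings E V m)"
  by (simp add: redei_berge_u_def labelled_orderings_def F_spec_eq_card_F_seqs card_SigmaI
      finite_Sigma_V finite_F_seqs)

lemma card_labelled_orderings_0:
  assumes "finite V"
  shows "card (labelled_orderings E V 0) = (if V = {} then 1 else 0)"
proof (cases "V = {}")
  case True
  have "F_seqs 0 {} 0 = {\<lambda>_. 0}" by (auto simp: F_seqs_def)
  then show ?thesis using True by (simp add: labelled_orderings_def Sigma_V_empty XDes_def)
next
  case False
  then have "1 \<in> {1..card V}" using assms by (simp add: Suc_le_eq card_gt_0_iff)
  then have "F_seqs (card V) I 0 = {}" for I by (force simp: F_seqs_def)
  then show ?thesis using False by (simp add: labelled_orderings_def)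
qed

text \<open>The inverse of cutting off the block of positions that carry the top label Suc m.\<close>
definition stack_top :: "nat \<Rightarrow> 'a set \<Rightarrow> 'a set \<Rightarrow> (nat \<Rightarrow> 'a)
    \<Rightarrow> (nat \<Rightarrow> 'a) \<times> (nat \<Rightarrow> nat) \<Rightarrow> (nat \<Rightarrow> 'a) \<times> (nat \<Rightarrow> nat)" where
  "stack_top m A T \<tau> =
     (\<lambda>(\<sigma>, i). (seq_append (card A) \<sigma> \<tau>, seq_append (card A) i (flat_seq (card T) (Suc m))))"

lemma stack_top_mem:
  assumes "finite V" "T \<subseteq> V" "\<tau> \<in> descent_free E T" "(\<sigma>, i) \<in> labelled_orderings E (V - T) m"
  shows "stack_top m (V - T) T \<tau> (\<sigma>, i) \<in> labelled_orderings E V (Suc m)"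
proof -
  define a where "a = card (V - T)"
  have card: "card V = a + card T" and V: "V - T \<union> T = V"
    using assms(1,2) unfolding a_def by (auto simp: card_Diff_subset card_mono finite_subset)
  have \<tau>: "\<tau> \<in> Sigma_V T" "XDes E (card T) \<tau> = {}" and \<sigma>: "\<sigma> \<in> Sigma_V (V - T)"
    and i: "i \<in> F_seqs a (XDes E a \<sigma>) m"
    using assms(3,4) by (auto simp: descent_free_def labelled_orderings_def a_def)
  have "seq_append a \<sigma> \<tau> \<in> Sigma_V V"
    using Sigma_V_seq_append[OF _ _ _ \<sigma> \<tau>(1)] assms(1,2) V unfolding a_def
    by (metis Diff_disjoint inf_commute finite_Diff finite_subset)
  moreover have "XDes E (a + card T) (seq_append a \<sigma> \<tau>) \<subseteq> XDes E a \<sigma> \<union> {a}"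
    using \<tau>(2) by (auto simp: XDes_seq_append)
  then have "seq_append a i (flat_seq (card T) (Suc m))
      \<in> F_seqs (a + card T) (XDes E (a + card T) (seq_append a \<sigma> \<tau>)) (Suc m)"
    by (intro F_seqs_seq_append_flat[OF i]) (auto simp: XDes_def)
  ultimately show ?thesis
    by (simp add: stack_top_def labelled_orderings_def card a_def)
qed

lemma stack_top_surj:
  assumes "(\<sigma>, i) \<in> labelled_orderings E V (Suc m)"
  obtains T \<tau> p where "T \<subseteq> V" "\<tau> \<in> descent_free E T" "p \<in> labelled_orderings E (V - T) m"
    "stack_top m (V - T) T \<tau> p = (\<sigma>, i)"
proof -
  define n where "n = card V"
  have \<sigma>: "\<sigma> \<in> Sigma_V V" and i: "i \<in> F_seqs n (XDes E n \<sigma>) (Suc m)"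
    using assms by (auto simp: labelled_orderings_def n_def)
  define a where "a = card {j \<in> {1..n}. i j \<le> m}"
  define i' where "i' = (\<lambda>j. if j \<le> a then i j else 0)"
  note i_split = F_seqs_split_top[OF i, folded a_def i'_def]
  define T where "T = \<sigma> ` {a<..n}"
  define \<sigma>' where "\<sigma>' = restrict \<sigma> {1..a}"
  define \<tau> where "\<tau> = restrict (\<lambda>j. \<sigma> (j + a)) {1..n - a}"
  note \<sigma>_split = Sigma_V_split[OF \<sigma> i_split(1)[unfolded n_def], folded n_def, folded T_def \<sigma>'_def \<tau>_def]
  have "finite V" using \<sigma> bij_betw_finite by (auto simp: Sigma_V_def)
  then have "card (V - T) = card V - card T" "card T \<le> card V"
    using \<sigma>_split(1) by (auto simp: card_Diff_subset finite_subset card_mono)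
  then have card_T: "card T = n - a" using \<sigma>_split(2) n_def by linarith
  have des: "XDes E n \<sigma> = XDes E a \<sigma>' \<union> {j. j = a \<and> 0 < a \<and> 0 < n - a \<and> (\<sigma>' a, \<tau> 1) \<in> E}
      \<union> (\<lambda>j. j + a) ` XDes E (n - a) \<tau>"
    using XDes_seq_append[of E a "n - a" \<sigma>' \<tau>] \<sigma>_split(5) i_split(1) by simp
  have "XDes E (card T) \<tau> = {}"
  proof (rule ccontr)
    assume "XDes E (card T) \<tau> \<noteq> {}"
    then obtain j where "j \<in> XDes E (n - a) \<tau>" using card_T by auto
    then have "j + a \<in> XDes E n \<sigma>" "1 \<le> j" using des by (auto simp: XDes_def)
    then show False using i_split(2) by auto
  qed
  then have "\<tau> \<in> descent_free E T" using \<sigma>_split(4) card_T by (simp add: descent_free_def)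
  moreover have "XDes E a \<sigma>' \<subseteq> XDes E n \<sigma> \<inter> {..<a}"
    using des by (auto simp: XDes_def)
  then have "i' \<in> F_seqs a (XDes E a \<sigma>') m"
    using F_seqs_antimono i_split(3) by blast
  then have "(\<sigma>', i') \<in> labelled_orderings E (V - T) m"
    using \<sigma>_split(2,3) by (simp add: labelled_orderings_def)
  moreover have "stack_top m (V - T) T \<tau> (\<sigma>', i') = (\<sigma>, i)"
    using \<sigma>_split(2,5) i_split(4) card_T by (simp add: stack_top_def)
  ultimately show ?thesis using that \<sigma>_split(1) by blast
qed

lemma stack_top_inj:
  assumes "finite V" "T \<subseteq> V" "\<tau> \<in> descent_free E T" "(\<sigma>, i) \<in> labelled_orderings E (V - T) m"
    and "T' \<subseteq> V" "\<tau>' \<in> descent_free E T'" "(\<sigma>', i') \<in> labelled_orderings E (V - T') m"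
    and eq: "stack_top m (V - T) T \<tau> (\<sigma>, i) = stack_top m (V - T') T' \<tau>' (\<sigma>', i')"
  shows "T = T' \<and> \<tau> = \<tau>' \<and> \<sigma> = \<sigma>' \<and> i = i'"
proof -
  define a where "a = card (V - T)"
  define a' where "a' = card (V - T')"
  have n: "card V = a + card T" "card V = a' + card T'"
    using assms(1,2,5) unfolding a_def a'_def by (auto simp: card_Diff_subset card_mono finite_subset)
  have \<sigma>: "bij_betw \<sigma> {1..a} (V - T)" "\<sigma> \<in> extensional {1..a}" "i \<in> F_seqs a (XDes E a \<sigma>) m"
    and \<sigma>': "bij_betw \<sigma>' {1..a'} (V - T')" "\<sigma>' \<in> extensional {1..a'}" "i' \<in> F_seqs a' (XDes E a' \<sigma>') m"
    using assms(4,7) by (auto simp: labelled_orderings_def Sigma_V_def PiE_def a_def a'_def)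
  have \<tau>: "\<tau> \<in> extensional {1..card T}" "\<tau>' \<in> extensional {1..card T'}"
    using assms(3,6) by (auto simp: descent_free_def Sigma_V_def PiE_def)
  have labels: "seq_append a i (flat_seq (card T) (Suc m)) = seq_append a' i' (flat_seq (card T') (Suc m))"
    and orders: "seq_append a \<sigma> \<tau> = seq_append a' \<sigma>' \<tau>'"
    using eq by (simp_all add: stack_top_def a_def a'_def)
  \<comment> \<open>the vertices labelled at most m come first, so the labels alone determine a\<close>
  have "{j \<in> {1..card V}. seq_append a i (flat_seq (card T) (Suc m)) j \<le> m} = {1..a}"
    "{j \<in> {1..card V}. seq_append a' i' (flat_seq (card T') (Suc m)) j \<le> m} = {1..a'}"
    using \<sigma>(3) \<sigma>'(3) n by (auto simp: F_seqs_def seq_append_def flat_seq_def)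
  then have aa: "a = a'" using labels by (metis card_atLeastAtMost diff_Suc_1)
  have orders_eq: "\<sigma> = \<sigma>' \<and> \<tau> = \<tau>'"
  proof (rule seq_append_eq_iff[THEN iffD1])
    show "seq_append a \<sigma> \<tau> = seq_append a \<sigma>' \<tau>'" using orders aa by simp
  qed (use \<sigma>(2) \<sigma>'(2) \<tau> aa in \<open>auto simp: extensional_def\<close>)
  then have "V - T = V - T'"
    using \<sigma>(1) \<sigma>'(1) aa by (simp add: bij_betw_def)
  then have TT: "T = T'" using assms(2,5) by auto
  moreover have "i = i'"
  proof -
    have "i = i' \<and> flat_seq (card T) (Suc m) = flat_seq (card T') (Suc m)"
    proof (rule seq_append_eq_iff[THEN iffD1])
      show "seq_append a i (flat_seq (card T) (Suc m)) = seq_append a i' (flat_seq (card T') (Suc m))"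
        using labels aa by simp
    qed (use \<sigma>(3) \<sigma>'(3) aa TT in \<open>auto simp: F_seqs_def\<close>)
    then show ?thesis by simp
  qed
  ultimately show ?thesis using orders_eq by simp
qed

lemma card_labelled_orderings_Suc:
  assumes V: "finite V"
  shows "card (labelled_orderings E V (Suc m))
       = (\<Sum>T\<in>Pow V. card (descent_free E T) * card (labelled_orderings E (V - T) m))"
proof -
  let ?D = "SIGMA T:Pow V. descent_free E T \<times> labelled_orderings E (V - T) m"
  let ?stack = "\<lambda>(T, \<tau>, p). stack_top m (V - T) T \<tau> p"
  have "inj_on ?stack ?D"
  proof (rule inj_onI)
    fix x y assume x: "x \<in> ?D" and y: "y \<in> ?D" and eq: "?stack x = ?stack y"
    obtain T \<tau> \<sigma> i T' \<tau>' \<sigma>' i' where xy: "x = (T, \<tau>, \<sigma>, i)" "y = (T', \<tau>', \<sigma>', i')"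
      by (cases x, cases y) auto
    have "T \<subseteq> V" "\<tau> \<in> descent_free E T" "(\<sigma>, i) \<in> labelled_orderings E (V - T) m"
      "T' \<subseteq> V" "\<tau>' \<in> descent_free E T'" "(\<sigma>', i') \<in> labelled_orderings E (V - T') m"
      using x y unfolding xy by simp_all
    moreover have "stack_top m (V - T) T \<tau> (\<sigma>, i) = stack_top m (V - T') T' \<tau>' (\<sigma>', i')"
      using eq unfolding xy by simp
    ultimately show "x = y" unfolding xy using stack_top_inj[OF V] by blast
  qed
  moreover have "?stack ` ?D = labelled_orderings E V (Suc m)"
  proof (intro equalityI subsetI)
    fix q assume "q \<in> ?stack ` ?D"
    then obtain x where x: "x \<in> ?D" "q = ?stack x" by blast
    obtain T \<tau> \<sigma> i where "x = (T, \<tau>, \<sigma>, i)" by (cases x)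
    then show "q \<in> labelled_orderings E V (Suc m)" using x stack_top_mem[OF V] by simp
  next
    fix q assume q: "q \<in> labelled_orderings E V (Suc m)"
    obtain \<sigma> i where \<sigma>i: "q = (\<sigma>, i)" by (cases q)
    obtain T \<tau> p where "T \<subseteq> V" "\<tau> \<in> descent_free E T" "p \<in> labelled_orderings E (V - T) m"
      "stack_top m (V - T) T \<tau> p = (\<sigma>, i)"
      using stack_top_surj q unfolding \<sigma>i by blast
    then show "q \<in> ?stack ` ?D" unfolding \<sigma>i by (intro image_eqI[of _ _ "(T, \<tau>, p)"]) auto
  qed
  ultimately have "card ?D = card (labelled_orderings E V (Suc m))"
    by (simp add: bij_betw_same_card bij_betw_def)
  moreover have "card ?D = (\<Sum>T\<in>Pow V. card (descent_free E T \<times> labelled_orderings E (V - T) m))"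
    using V by (intro card_SigmaI) (auto intro!: finite_cartesian_product finite_descent_free
        finite_labelled_orderings intro: rev_finite_subset)
  ultimately show ?thesis by (simp add: card_cartesian_product)
qed

lemma card_labelled_orderings_eq_colouring_sum:
  "finite V \<Longrightarrow> card (labelled_orderings E V m) = colouring_sum (\<lambda>T. card (descent_free E T)) V {1..m}"
proof (induction m arbitrary: V)
  case 0
  then show ?case by (simp add: card_labelled_orderings_0 colouring_sum_no_colours)
next
  case (Suc m)
  have "{1..Suc m} = insert (Suc m) {1..m}" by auto
  then show ?case
    using Suc by (simp add: card_labelled_orderings_Suc colouring_sum_insert)
qed

lemma of_nat_colouring_sum: "of_nat (colouring_sum w S C) = colouring_sum (\<lambda>T. of_nat (w T)) S C"
  by (simp add: colouring_sum_def)

theorem mainTheorem14: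
  fixes V :: "'a set" and E :: "('a \<times> 'a) set"
  assumes "digraph V E"
  shows "\<exists>p :: int poly. \<forall>m :: nat. int (redei_berge_u V E m) = poly p (int m)"
proof -
  have V: "finite V" using assms by (simp add: digraph_def)
  have "\<exists>p. \<forall>C :: nat set. finite C
      \<longrightarrow> colouring_sum (\<lambda>T. int (card (descent_free E T))) V C = poly p (int (card C))"
    by (rule colouring_sum_polynomial[OF V]) (simp add: card_descent_free_empty)
  then obtain p :: "int poly" where p: "\<And>C :: nat set. finite C
      \<Longrightarrow> colouring_sum (\<lambda>T. int (card (descent_free E T))) V C = poly p (int (card C))"
    by blast
  have "int (redei_berge_u V E m) = poly p (int m)" for m
    using p[of "{1..m}"] V
    by (simp add: redei_berge_u_eq_card card_labelled_orderings_eq_colouring_sum of_nat_colouring_sum)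
  then show ?thesis by blast
qed

end
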